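(* Let $\Omega\subseteq\mathbb R^N$ be an open bounded set, $K\in L^\infty(\Omega\times B_1)$ with $\lambda\le K\le\Lambda$ on $\Omega\times B_1$ for some $0<\lambda\le\Lambda$, and let $u\in L^1(B_1(\Omega))\cap C^{Dini}_{loc}(\Omega)\cap C(\overline\Omega)$ satisfy $L_Ku\le0$ in $\Omega$ and $u\le0$ on $\mathbb R^N\setminus\Omega$. Then $u\le0$ in $\Omega$.
   Context: $B_1(\Omega):=\bigcup_{x\in\Omega}B_1(x)$. $C^{Dini}_{loc}(\Omega)$: functions that on every closed ball contained in $\Omega$ admit a modulus of continuity $\omega$ with $\int_0^1\omega(\rho)\rho^{-1}d\rho<\infty$. $L_Ku(x):=\int_{B_1(x)}\frac{u(x)-u(y)}{|y-x|^N}K(x,y-x)\,dy$ for $x\in\Omega$. *)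

theory Defs
  imports "HOL-Analysis.Analysis"
begin

definition unit_nbhd :: "'a::euclidean_space set \<Rightarrow> 'a set" where
  "unit_nbhd \<Omega> = (\<Union>x\<in>\<Omega>. ball x 1)"

definition dini_modulus :: "(real \<Rightarrow> real) \<Rightarrow> bool" where
  "dini_modulus \<omega> \<longleftrightarrow>
     \<omega> 0 = 0 \<and> (\<forall>t\<ge>0. 0 \<le> \<omega> t) \<and> mono_on {0..} \<omega> \<and>
     (\<omega> \<longlongrightarrow> 0) (at_right 0) \<and>
     set_integrable lborel {0<..1} (\<lambda>\<rho>. \<omega> \<rho> / \<rho>)"

definition C_Dini_loc :: "'a::euclidean_space set \<Rightarrow> ('a \<Rightarrow> real) \<Rightarrow> bool" where
  "C_Dini_loc \<Omega> u \<longleftrightarrow>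
     (\<forall>c r. cball c r \<subseteq> \<Omega> \<longrightarrow>
        (\<exists>\<omega>. dini_modulus \<omega> \<and>
              (\<forall>x\<in>cball c r. \<forall>y\<in>cball c r. \<bar>u x - u y\<bar> \<le> \<omega> (dist x y))))"

definition L_K :: "('a::euclidean_space \<Rightarrow> 'a \<Rightarrow> real) \<Rightarrow> ('a \<Rightarrow> real) \<Rightarrow> 'a \<Rightarrow> real" where
  "L_K K u x = set_lebesgue_integral lebesgue (ball x 1)
      (\<lambda>y. (u x - u y) / norm (y - x) ^ DIM('a) * K x (y - x))"

end

theory Submission
  imports Defs
begin

text \<open>Suppose \<open>u\<close> is positive somewhere. Its maximum over \<open>closure \<Omega>\<close> is then a global
  maximum, and among the maximum points we choose one, \<open>x\<close>, extremal in a coordinate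
  direction \<open>e\<close>; it lies in \<open>\<Omega>\<close>. The integrand of \<open>L_K u x\<close> is nonnegative, and
  Dini continuity at \<open>x\<close> (summed over dyadic shells) makes it integrable, so
  \<open>L_K u x \<le> 0\<close> forces \<open>u = u x\<close> almost everywhere on \<open>ball x 1\<close>. By extremality, however,
  \<open>u < u x\<close> on the ball of radius 1/2 touching \<open>x\<close> in direction \<open>e\<close>, which is not negligible.\<close>

definition dyadic_interval :: "nat \<Rightarrow> real set" where
  "dyadic_interval k = {(1/2)^Suc k<..(1/2)^k}"

lemma disjoint_family_dyadic_interval: "disjoint_family dyadic_interval"
proof -
  have "dyadic_interval i \<inter> dyadic_interval j = {}" if "i < j" for i j
  proof -
    have "(1/2::real)^j \<le> (1/2)^Suc i" using that by (intro power_decreasing) auto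
    then show ?thesis by (auto simp: dyadic_interval_def)
  qed
  then show ?thesis
    unfolding disjoint_family_on_def by (metis Int_commute linorder_neqE_nat)
qed

lemma dyadic_interval_subset: "dyadic_interval k \<subseteq> {0<..1}"
  using power_le_one[of "1/2::real" k] by (auto simp: dyadic_interval_def)

lemma dyadic_interval_cover:
  assumes "\<rho> \<in> {0<..1}"
  obtains k where "\<rho> \<in> dyadic_interval k"
proof -
  define m where "m = (LEAST n. (1/2::real)^n < \<rho>)"
  obtain n where "(1/2::real)^n < \<rho>" using real_arch_pow_inv[of \<rho> "1/2"] assms by auto
  then have m: "(1/2::real)^m < \<rho>" unfolding m_def by (rule LeastI)
  then obtain k where k: "m = Suc k" using assms by (cases m) auto
  then have "\<not> (1/2::real)^k < \<rho>" using not_less_Least[of k "\<lambda>n. (1/2::real)^n < \<rho>"]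
    by (simp add: m_def)
  with m k show ?thesis using that[of k] by (auto simp: dyadic_interval_def)
qed

lemma dini_modulus_dyadic_sum_finite:
  assumes "dini_modulus \<omega>"
  shows "(\<Sum>k. ennreal (\<omega> ((1/2)^Suc k))) < \<infinity>"
proof -
  have nonneg: "\<And>t. 0 \<le> t \<Longrightarrow> 0 \<le> \<omega> t" and mono: "mono_on {0..} \<omega>"
    and int: "set_integrable lborel {0<..1} (\<lambda>\<rho>. \<omega> \<rho> / \<rho>)"
    using assms unfolding dini_modulus_def by auto
  define g where "g \<rho> = indicator {0<..1} \<rho> * (\<omega> \<rho> / \<rho>)" for \<rho> :: real
  have g_int: "integrable lborel g"
    using int by (simp add: set_integrable_def g_def[abs_def] mult.assoc)
  then have [measurable]: "g \<in> borel_measurable lborel" by auto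
  have g_nonneg: "0 \<le> g \<rho>" for \<rho>
    using nonneg[of \<rho>] by (simp add: g_def indicator_def)
  have term_le: "ennreal (\<omega> ((1/2)^Suc k)) \<le> 2 * (\<integral>\<^sup>+\<rho>\<in>dyadic_interval k. g \<rho> \<partial>lborel)" for k
  proof -
    define a :: real where "a = (1/2)^k"
    have a: "0 < a" "(1/2)^Suc k = a/2" "dyadic_interval k = {a/2<..a}"
      by (simp_all add: a_def dyadic_interval_def)
    have "ennreal (\<omega> (a/2) / a) * indicator {a/2<..a} \<rho> \<le> ennreal (g \<rho>) * indicator {a/2<..a} \<rho>" for \<rho>
    proof (cases "\<rho> \<in> {a/2<..a}")
      case True
      then have "\<omega> (a/2) \<le> \<omega> \<rho>" "\<rho> \<in> {0<..1}"
        using a dyadic_interval_subset[of k] by (auto intro!: mono_onD[OF mono])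
      then have "\<omega> (a/2) / a \<le> g \<rho>"
        using True a nonneg[of "a/2"] by (auto simp: g_def intro!: frac_le)
      then show ?thesis using True by (simp add: ennreal_leI)
    qed simp
    then have "ennreal (\<omega> (a/2) / a) * emeasure lborel {a/2<..a} \<le> (\<integral>\<^sup>+\<rho>\<in>{a/2<..a}. g \<rho> \<partial>lborel)"
      by (subst nn_integral_cmult_indicator[symmetric]) (auto intro: nn_integral_mono)
    moreover have "ennreal (\<omega> (a/2) / a) * emeasure lborel {a/2<..a} = ennreal (\<omega> (a/2) / 2)"
      using a nonneg[of "a/2"] by (simp add: ennreal_mult''[symmetric])
    ultimately have "2 * ennreal (\<omega> (a/2) / 2) \<le> 2 * (\<integral>\<^sup>+\<rho>\<in>{a/2<..a}. g \<rho> \<partial>lborel)"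
      by (intro mult_left_mono) auto
    moreover have "2 * ennreal (\<omega> (a/2) / 2) = ennreal (\<omega> (a/2))"
      using ennreal_mult[of 2 "\<omega> (a/2) / 2"] a nonneg[of "a/2"] by simp
    ultimately show ?thesis using a by simp
  qed
  have "(\<Sum>k. ennreal (\<omega> ((1/2)^Suc k))) \<le> (\<Sum>k. 2 * (\<integral>\<^sup>+\<rho>\<in>dyadic_interval k. g \<rho> \<partial>lborel))"
    by (intro suminf_le term_le) auto
  also have "\<dots> = 2 * (\<integral>\<^sup>+\<rho>\<in>(\<Union>k. dyadic_interval k). g \<rho> \<partial>lborel)"
    by (subst nn_integral_disjoint_family)
      (auto simp: disjoint_family_dyadic_interval dyadic_interval_def)
  also have "\<dots> \<le> 2 * (\<integral>\<^sup>+\<rho>. g \<rho> \<partial>lborel)"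
    by (intro mult_left_mono nn_integral_mono) (auto split: split_indicator)
  also have "\<dots> < \<infinity>"
    using integrableD(2)[OF g_int] g_nonneg by (simp add: ennreal_mult_less_top top.not_eq_extremum)
  finally show ?thesis .
qed

lemma dini_modulus_radial_measurable:
  fixes x :: "'a::euclidean_space"
  assumes "dini_modulus \<omega>"
  shows "(\<lambda>y. \<omega> (norm (y - x))) \<in> borel_measurable lborel"
proof -
  have "mono (\<lambda>t. \<omega> (max 0 t))"
    using assms unfolding dini_modulus_def by (intro monoI mono_onD[of "{0..}" \<omega>]) auto
  then have "(\<lambda>t. \<omega> (max 0 t)) \<in> borel_measurable borel"
    by (rule borel_measurable_mono)
  then have "(\<lambda>y. \<omega> (max 0 (norm (y - x)))) \<in> borel_measurable lborel"
    by (rule measurable_compose[where f = "\<lambda>y. norm (y - x)", rotated]) auto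
  then show ?thesis by simp
qed

lemma dini_modulus_shell_integral_le:
  fixes x :: "'a::euclidean_space"
  assumes "dini_modulus \<omega>"
  shows "(\<integral>\<^sup>+y\<in>{y. norm (y - x) \<in> dyadic_interval (Suc k)}.
      \<omega> (norm (y - x)) / norm (y - x) ^ DIM('a) \<partial>lborel)
    \<le> ennreal (unit_ball_vol DIM('a) * 2 ^ DIM('a)) * ennreal (\<omega> ((1/2)^Suc k))"
proof -
  have nonneg: "\<And>t. 0 \<le> t \<Longrightarrow> 0 \<le> \<omega> t" and mono: "mono_on {0..} \<omega>"
    using assms unfolding dini_modulus_def by auto
  define N where "N = DIM('a)"
  define A where "A = {y. norm (y - x) \<in> dyadic_interval (Suc k)}"
  define c where "c = \<omega> ((1/2)^Suc k) / ((1/2)^Suc (Suc k))^N"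
  have "0 \<le> c"
    using nonneg by (simp add: c_def)
  have A_eq: "A = cball x ((1/2)^Suc k) - cball x ((1/2)^Suc (Suc k))"
    by (auto simp: A_def dyadic_interval_def dist_norm norm_minus_commute)
  have "ennreal (\<omega> (norm (y - x)) / norm (y - x) ^ N) * indicator A y \<le> ennreal c * indicator A y" for y
  proof (cases "y \<in> A")
    case True
    then have r: "(1/2)^Suc (Suc k) < norm (y - x)" "norm (y - x) \<le> (1/2)^Suc k"
      by (auto simp: A_def dyadic_interval_def)
    have "\<omega> (norm (y - x)) \<le> \<omega> ((1/2)^Suc k)"
      using r by (intro mono_onD[OF mono]) auto
    moreover have "((1/2)^Suc (Suc k))^N \<le> norm (y - x)^N"
      using r by (intro power_mono) auto
    ultimately have "\<omega> (norm (y - x)) / norm (y - x) ^ N \<le> c"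
      unfolding c_def using nonneg[of "norm (y - x)"] by (auto intro!: frac_le)
    then show ?thesis using True by (simp add: ennreal_leI)
  qed simp
  then have "(\<integral>\<^sup>+y\<in>A. \<omega> (norm (y - x)) / norm (y - x) ^ N \<partial>lborel) \<le> ennreal c * emeasure lborel A"
    by (subst nn_integral_cmult_indicator[symmetric]) (auto simp: A_eq intro: nn_integral_mono)
  also have "\<dots> \<le> ennreal c * emeasure lborel (cball x ((1/2)^Suc k))"
    by (intro mult_left_mono emeasure_mono) (auto simp: A_eq)
  also have "\<dots> = ennreal (c * (unit_ball_vol N * ((1/2)^Suc k)^N))"
    using \<open>0 \<le> c\<close> by (simp add: N_def emeasure_cball ennreal_mult)
  also have "c * (unit_ball_vol N * ((1/2)^Suc k)^N) = unit_ball_vol N * 2^N * \<omega> ((1/2)^Suc k)"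
  proof -
    have "((1/2::real)^Suc (Suc k))^N = ((1/2)^Suc k)^N * (1/2)^N"
      by (simp add: power_mult_distrib[symmetric])
    then show ?thesis by (simp add: c_def field_simps power_one_over)
  qed
  finally show ?thesis
    using nonneg[of "(1/2)^Suc k"] by (simp add: A_def N_def ennreal_mult)
qed

lemma dini_modulus_radial_integrable:
  fixes x :: "'a::euclidean_space"
  assumes "dini_modulus \<omega>"
  shows "integrable lebesgue
    (\<lambda>y. indicator (cball x (1/2)) y * (\<omega> (norm (y - x)) / norm (y - x) ^ DIM('a)))"
proof -
  have nonneg: "\<And>t. 0 \<le> t \<Longrightarrow> 0 \<le> \<omega> t"
    using assms unfolding dini_modulus_def by auto
  define N where "N = DIM('a)"
  define f where "f y = \<omega> (norm (y - x)) / norm (y - x) ^ N" for y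
  define F where "F y = indicator (cball x (1/2)) y * f y" for y
  define A where "A k = {y. norm (y - x) \<in> dyadic_interval (Suc k)}" for k
  have f_meas: "f \<in> borel_measurable lborel"
    using dini_modulus_radial_measurable[OF assms] unfolding f_def[abs_def] by measurable
  have A_meas: "A k \<in> sets lborel" for k
    by (simp add: A_def dyadic_interval_def)
  have F_meas: "F \<in> borel_measurable lborel"
    unfolding F_def[abs_def] using f_meas by (intro borel_measurable_times borel_measurable_indicator) auto
  have F_nonneg: "0 \<le> F y" for y
    using nonneg by (simp add: F_def f_def indicator_def)
  have A_disj: "disjoint_family A"
    using disjoint_family_dyadic_interval unfolding disjoint_family_on_def A_def
    by (metis (no_types, lifting) Suc_inject disjoint_iff mem_Collect_eq UNIV_I)
  have F_le: "ennreal (F y) \<le> ennreal (f y) * indicator (\<Union>k. A k) y" for y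
  proof (cases "y \<in> cball x (1/2) \<and> y \<noteq> x")
    case True
    then have "norm (y - x) \<in> {0<..1}"
      by (auto simp: dist_norm norm_minus_commute)
    then obtain m where m: "norm (y - x) \<in> dyadic_interval m"
      by (rule dyadic_interval_cover)
    moreover obtain k where "m = Suc k"
      using True m by (cases m) (auto simp: dyadic_interval_def dist_norm norm_minus_commute)
    ultimately have "y \<in> (\<Union>k. A k)" by (auto simp: A_def)
    then show ?thesis using True by (simp add: F_def)
  qed (auto simp: F_def f_def N_def zero_power[OF DIM_positive])
  have "(\<integral>\<^sup>+y. F y \<partial>lborel) \<le> (\<integral>\<^sup>+y\<in>(\<Union>k. A k). f y \<partial>lborel)"
    by (intro nn_integral_mono F_le)
  also have "\<dots> = (\<Sum>k. \<integral>\<^sup>+y\<in>A k. f y \<partial>lborel)"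
    by (rule nn_integral_disjoint_family) (use A_disj A_meas f_meas in auto)
  also have "\<dots> \<le> (\<Sum>k. ennreal (unit_ball_vol N * 2^N) * ennreal (\<omega> ((1/2)^Suc k)))"
    using dini_modulus_shell_integral_le[OF assms, of x]
    by (intro suminf_le) (auto simp: A_def f_def N_def)
  also have "\<dots> < \<infinity>"
    using dini_modulus_dyadic_sum_finite[OF assms] by (simp add: ennreal_mult_less_top)
  finally have "integrable lborel F"
    using F_meas F_nonneg by (intro integrableI_nonneg) auto
  then have "integrable lebesgue F"
    using F_meas by (subst integrable_completion) auto
  then show ?thesis unfolding F_def f_def N_def .
qed

lemma lebesgue_measurable_translate:
  fixes k :: "'a::euclidean_space \<Rightarrow> real"
  assumes "k \<in> borel_measurable lebesgue"
  shows "(\<lambda>y. k (y - x)) \<in> borel_measurable lebesgue"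
proof -
  have "(\<lambda>y. - x + (\<Sum>j\<in>Basis. (1 * (y \<bullet> j)) *\<^sub>R j)) \<in> lebesgue \<rightarrow>\<^sub>M lebesgue"
    using lebesgue_affine_measurable[of "\<lambda>_. 1" "- x"] by simp
  then have "(\<lambda>y. y - x) \<in> lebesgue \<rightarrow>\<^sub>M lebesgue"
    by (simp add: euclidean_representation)
  then show ?thesis
    using assms by (rule measurable_compose)
qed

lemma L_K_integrand_bound:
  fixes x y :: "'a::euclidean_space"
  assumes "0 < r" and "r \<le> 1/2" and "0 \<le> C" and "\<bar>k (y - x)\<bar> \<le> C"
    and \<omega>_nonneg: "\<And>t. 0 \<le> t \<Longrightarrow> 0 \<le> \<omega> t"
    and modulus: "y \<in> cball x r \<Longrightarrow> \<bar>u x - u y\<bar> \<le> \<omega> (dist x y)"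
  shows "\<bar>(u x - u y) / norm (y - x) ^ DIM('a) * k (y - x)\<bar>
    \<le> C * (indicator (cball x (1/2)) y * (\<omega> (norm (y - x)) / norm (y - x) ^ DIM('a)))
      + (\<bar>u x\<bar> + \<bar>u y\<bar>) * (C / r ^ DIM('a))"
    (is "_ \<le> ?near + ?far")
proof -
  define N where "N = DIM('a)"
  let ?\<rho> = "norm (y - x)"
  have "\<bar>(u x - u y) / ?\<rho>^N * k (y - x)\<bar> \<le> \<bar>u x - u y\<bar> / ?\<rho>^N * C"
    using assms(4) by (simp add: abs_mult divide_right_mono mult_left_mono)
  moreover have "0 \<le> ?near" "0 \<le> ?far"
    using \<omega>_nonneg \<open>0 \<le> C\<close> \<open>0 < r\<close> by (simp_all add: indicator_def)
  moreover have "\<bar>u x - u y\<bar> / ?\<rho>^N * C \<le> ?near + ?far"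
  proof (cases "?\<rho> \<le> r")
    case True
    then have "\<bar>u x - u y\<bar> \<le> \<omega> ?\<rho>" "y \<in> cball x (1/2)"
      using modulus \<open>r \<le> 1/2\<close> by (auto simp: dist_norm norm_minus_commute)
    then have "\<bar>u x - u y\<bar> / ?\<rho>^N * C \<le> ?near"
      using \<open>0 \<le> C\<close> by (simp add: N_def divide_right_mono mult.commute mult_left_mono)
    then show ?thesis using \<open>0 \<le> ?far\<close> by linarith
  next
    case False
    then have "\<bar>u x - u y\<bar> / ?\<rho>^N \<le> (\<bar>u x\<bar> + \<bar>u y\<bar>) / r^N"
      using \<open>0 < r\<close> by (auto intro!: frac_le power_mono)
    then have "\<bar>u x - u y\<bar> / ?\<rho>^N * C \<le> ?far"
      using mult_right_mono[OF _ \<open>0 \<le> C\<close>] by (fastforce simp: N_def)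
    then show ?thesis using \<open>0 \<le> ?near\<close> by linarith
  qed
  ultimately show ?thesis
    unfolding N_def by linarith
qed

lemma L_K_integrand_integrable:
  fixes x :: "'a::euclidean_space" and u k :: "'a \<Rightarrow> real"
  assumes "0 < \<delta>" and dini: "dini_modulus \<omega>"
    and modulus: "\<And>y. y \<in> cball x \<delta> \<Longrightarrow> \<bar>u x - u y\<bar> \<le> \<omega> (dist x y)"
    and u_int: "set_integrable lebesgue (ball x 1) u"
    and k_meas: "k \<in> borel_measurable lebesgue"
    and k_bound: "\<And>z. z \<in> ball 0 1 \<Longrightarrow> \<bar>k z\<bar> \<le> C"
  shows "set_integrable lebesgue (ball x 1)
    (\<lambda>y. (u x - u y) / norm (y - x) ^ DIM('a) * k (y - x))"
proof -
  define N where "N = DIM('a)"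
  define B where "B = ball x (1::real)"
  define r where "r = min \<delta> (1/2)"
  have r: "0 < r" "r \<le> \<delta>" "r \<le> 1/2"
    using \<open>0 < \<delta>\<close> by (auto simp: r_def)
  have "0 \<le> C"
    using k_bound[of 0] by simp
  have \<omega>_nonneg: "\<And>t. 0 \<le> t \<Longrightarrow> 0 \<le> \<omega> t"
    using dini unfolding dini_modulus_def by auto
  define g where "g y = indicator B y * ((u x - u y) / norm (y - x) ^ N * k (y - x))" for y
  define h where "h y = C * (indicator (cball x (1/2)) y * (\<omega> (norm (y - x)) / norm (y - x) ^ N))
      + indicator B y * (\<bar>u x\<bar> + \<bar>u y\<bar>) * (C / r^N)" for y
  have [measurable]: "(\<lambda>y. indicator B y * u y) \<in> borel_measurable lebesgue"
    using u_int by (auto simp: set_integrable_def B_def)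
  have [measurable]: "(\<lambda>y. k (y - x)) \<in> borel_measurable lebesgue"
    by (rule lebesgue_measurable_translate[OF k_meas])
  have [measurable]: "(\<lambda>y. norm (y - x)) \<in> borel_measurable lebesgue"
    by (rule measurable_completion) measurable
  have [measurable]: "B \<in> sets lebesgue"
    by (simp add: B_def)
  have "g = (\<lambda>y. (indicator B y * u x - indicator B y * u y) / norm (y - x) ^ N * k (y - x))"
    by (auto simp: g_def[abs_def] indicator_def)
  then have g_meas: "g \<in> borel_measurable lebesgue"
    by simp
  have "integrable lebesgue h"
  proof -
    have "integrable lebesgue (\<lambda>y. indicator B y * \<bar>u y\<bar>)"
      using set_integrable_abs[OF u_int] by (simp add: set_integrable_def B_def)
    moreover have "emeasure lebesgue B < \<infinity>"
      using emeasure_lborel_ball_finite[of x 1] by (simp add: B_def)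
    then have "integrable lebesgue (\<lambda>y. indicator B y * \<bar>u x\<bar>)"
      by (intro integrable_mult_left integrable_indicator) auto
    ultimately have "integrable lebesgue (\<lambda>y. indicator B y * (\<bar>u x\<bar> + \<bar>u y\<bar>))"
      unfolding distrib_left by (rule Bochner_Integration.integrable_add[rotated])
    then show ?thesis
      unfolding h_def[abs_def] N_def using dini_modulus_radial_integrable[OF dini]
      by (intro Bochner_Integration.integrable_add integrable_mult_right integrable_mult_left) auto
  qed
  moreover have "norm (g y) \<le> norm (h y)" for y
  proof (cases "y \<in> B")
    case True
    then have "\<bar>k (y - x)\<bar> \<le> C"
      using k_bound[of "y - x"] by (simp add: B_def dist_norm norm_minus_commute)
    moreover have "y \<in> cball x r \<Longrightarrow> \<bar>u x - u y\<bar> \<le> \<omega> (dist x y)"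
      using modulus[of y] r(2) by auto
    ultimately have "\<bar>g y\<bar> \<le> h y"
      using L_K_integrand_bound[where x = x and y = y and k = k and u = u and \<omega> = \<omega>,
          OF r(1,3) \<open>0 \<le> C\<close> _ \<omega>_nonneg] True
      by (simp add: g_def h_def N_def)
    then show ?thesis by simp
  qed (simp add: g_def)
  ultimately have "integrable lebesgue g"
    by (intro Bochner_Integration.integrable_bound[OF _ g_meas] AE_I2)
  then show ?thesis
    by (simp add: set_integrable_def g_def[abs_def] B_def N_def)
qed

lemma C_Dini_loc_L_K_integrand_integrable:
  fixes x :: "'a::euclidean_space" and u k :: "'a \<Rightarrow> real"
  assumes "open \<Omega>" and "x \<in> \<Omega>" and "C_Dini_loc \<Omega> u"
    and "set_integrable lebesgue (ball x 1) u"
    and "k \<in> borel_measurable lebesgue" and "\<And>z. z \<in> ball 0 1 \<Longrightarrow> \<bar>k z\<bar> \<le> C"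
  shows "set_integrable lebesgue (ball x 1)
    (\<lambda>y. (u x - u y) / norm (y - x) ^ DIM('a) * k (y - x))"
proof -
  obtain \<delta> where "0 < \<delta>" "cball x \<delta> \<subseteq> \<Omega>"
    using open_contains_cball \<open>open \<Omega>\<close> \<open>x \<in> \<Omega>\<close> by blast
  then obtain \<omega> where "dini_modulus \<omega>" "\<And>y. y \<in> cball x \<delta> \<Longrightarrow> \<bar>u x - u y\<bar> \<le> \<omega> (dist x y)"
    using \<open>C_Dini_loc \<Omega> u\<close> unfolding C_Dini_loc_def by (meson centre_in_cball less_imp_le)
  then show ?thesis
    using L_K_integrand_integrable[OF \<open>0 < \<delta>\<close> _ _ assms(4-6)] by blast
qed

lemma L_K_nonpos_at_max_imp_AE_eq:
  fixes x :: "'a::euclidean_space"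
  assumes integrable: "set_integrable lebesgue (ball x 1)
      (\<lambda>y. (u x - u y) / norm (y - x) ^ DIM('a) * K x (y - x))"
    and max: "\<And>y. y \<in> ball x 1 \<Longrightarrow> u y \<le> u x"
    and K_pos: "\<And>z. z \<in> ball 0 1 \<Longrightarrow> 0 < K x z"
    and "L_K K u x \<le> 0"
  shows "AE y in lebesgue. y \<in> ball x 1 \<longrightarrow> u y = u x"
proof -
  define g where "g y = indicator (ball x 1) y * ((u x - u y) / norm (y - x) ^ DIM('a) * K x (y - x))" for y
  have K_pos': "0 < K x (y - x)" if "y \<in> ball x 1" for y
    using K_pos[of "y - x"] that by (simp add: dist_norm norm_minus_commute)
  have g_nonneg: "0 \<le> g y" for y
  proof (cases "y \<in> ball x 1")
    case True
    then show ?thesis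
      unfolding g_def using max[of y] K_pos'[of y]
      by (intro mult_nonneg_nonneg divide_nonneg_nonneg) auto
  qed (simp add: g_def)
  have g_int: "integrable lebesgue g"
    using integrable by (simp add: set_integrable_def g_def[abs_def])
  have "integral\<^sup>L lebesgue g = L_K K u x"
    by (simp add: L_K_def set_lebesgue_integral_def g_def[abs_def])
  moreover have "0 \<le> integral\<^sup>L lebesgue g"
    using g_nonneg by (simp add: Bochner_Integration.integral_nonneg)
  ultimately have "integral\<^sup>L lebesgue g = 0"
    using \<open>L_K K u x \<le> 0\<close> by simp
  then have "AE y in lebesgue. g y = 0"
    using integral_nonneg_eq_0_iff_AE[OF g_int] g_nonneg by simp
  then show ?thesis
  proof (rule AE_mp, intro AE_I2 impI)
    fix y assume "g y = 0" and y: "y \<in> ball x 1"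
    show "u y = u x"
      using \<open>g y = 0\<close> y K_pos'[OF y] by (cases "y = x") (auto simp: g_def)
  qed
qed

lemma inner_less_in_ball_shifted:
  fixes x e :: "'a::euclidean_space"
  assumes "norm e = 1" and "y \<in> ball (x + r *\<^sub>R e) r"
  shows "x \<bullet> e < y \<bullet> e"
proof -
  have "\<bar>(y - (x + r *\<^sub>R e)) \<bullet> e\<bar> \<le> norm (y - (x + r *\<^sub>R e))"
    using Cauchy_Schwarz_ineq2[of "y - (x + r *\<^sub>R e)" e] assms(1) by simp
  also have "\<dots> < r"
    using assms(2) by (simp add: dist_norm norm_minus_commute)
  finally show ?thesis
    using assms(1) by (simp add: inner_diff_left inner_add_left dot_square_norm)
qed

lemma extremal_maximum_point:
  fixes u :: "'a::euclidean_space \<Rightarrow> real"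
  assumes "compact C" and "continuous_on C u" and "x0 \<in> C" and "0 < u x0"
    and outside: "\<And>x. x \<notin> C \<Longrightarrow> u x \<le> 0" and "norm e = 1"
  obtains x where "x \<in> C" "0 < u x" "\<And>y. u y \<le> u x"
    "\<And>r y. y \<in> ball (x + r *\<^sub>R e) r \<Longrightarrow> u y < u x"
proof -
  obtain xm where "xm \<in> C" and xm: "\<And>y. y \<in> C \<Longrightarrow> u y \<le> u xm"
    using continuous_attains_sup[OF \<open>compact C\<close> _ \<open>continuous_on C u\<close>] \<open>x0 \<in> C\<close> by blast
  define M where "M = u xm"
  have "0 < M"
    using xm[OF \<open>x0 \<in> C\<close>] \<open>0 < u x0\<close> by (simp add: M_def)
  have le_M: "u y \<le> M" for y
    using xm[of y] outside[of y] \<open>0 < M\<close> by (cases "y \<in> C") (auto simp: M_def)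
  define S where "S = {y \<in> C. u y = M}"
  have "closed S"
    unfolding S_def using \<open>continuous_on C u\<close> compact_imp_closed[OF \<open>compact C\<close>]
    by (rule continuous_closed_preimage_constant)
  moreover have "C \<inter> S = S"
    by (auto simp: S_def)
  ultimately have "compact S"
    using compact_Int_closed[OF \<open>compact C\<close>] by metis
  moreover have "S \<noteq> {}"
    using \<open>xm \<in> C\<close> by (auto simp: S_def M_def)
  moreover have "continuous_on S (\<lambda>y. y \<bullet> e)"
    by (intro continuous_intros)
  ultimately obtain x where "x \<in> S" and x: "\<And>y. y \<in> S \<Longrightarrow> y \<bullet> e \<le> x \<bullet> e"
    using continuous_attains_sup[of S "\<lambda>y. y \<bullet> e"] by blast
  have "u y < M" if "y \<in> ball (x + r *\<^sub>R e) r" for r y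
  proof -
    have "y \<notin> S"
      using x[of y] inner_less_in_ball_shifted[OF \<open>norm e = 1\<close> that] by fastforce
    then have "u y \<noteq> M"
      using outside[of y] \<open>0 < M\<close> by (auto simp: S_def)
    with le_M[of y] show ?thesis by simp
  qed
  with that[of x] \<open>x \<in> S\<close> le_M \<open>0 < M\<close> show thesis
    by (simp add: S_def)
qed

lemma AE_ball_imp_ex:
  fixes c :: "'a::euclidean_space"
  assumes "0 < r" and "AE y in lebesgue. y \<in> ball c r \<longrightarrow> P y"
  obtains y where "y \<in> ball c r" "P y"
proof (rule ccontr)
  assume "\<not> thesis"
  with that have "AE y in lebesgue. y \<notin> ball c r"
    using assms(2) by (auto elim!: AE_mp)
  then have "negligible (ball c r)"
    by (simp add: negligible_iff_null_sets AE_iff_null_sets)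
  with open_not_negligible[of "ball c r"] \<open>0 < r\<close> show False
    by simp
qed

theorem lemma4p1:
  fixes \<Omega> :: "'a::euclidean_space set"
    and K :: "'a \<Rightarrow> 'a \<Rightarrow> real"
    and u :: "'a \<Rightarrow> real"
    and lam Lam :: real
  assumes "open \<Omega>" and "bounded \<Omega>"
    and "(\<lambda>p. indicator (\<Omega> \<times> ball 0 1) p * K (fst p) (snd p)) \<in> borel_measurable lebesgue"
    and "\<And>x. x \<in> \<Omega> \<Longrightarrow> K x \<in> borel_measurable lebesgue"
    and "0 < lam" and "lam \<le> Lam"
    and "\<And>x z. x \<in> \<Omega> \<Longrightarrow> z \<in> ball 0 1 \<Longrightarrow> lam \<le> K x z \<and> K x z \<le> Lam"
    and "set_integrable lebesgue (unit_nbhd \<Omega>) u"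
    and "C_Dini_loc \<Omega> u"
    and "continuous_on (closure \<Omega>) u"
    and "\<And>x. x \<in> \<Omega> \<Longrightarrow> L_K K u x \<le> 0"
    and "\<And>x. x \<notin> \<Omega> \<Longrightarrow> u x \<le> 0"
  shows "\<forall>x\<in>\<Omega>. u x \<le> 0"
proof (rule ccontr)
  note K_meas = assms(4) and K_bounds = assms(7) and u_int = assms(8)
    and u_cont = assms(10) and L_K_nonpos = assms(11) and outside = assms(12)
  assume "\<not> (\<forall>x\<in>\<Omega>. u x \<le> 0)"
  then obtain x0 where "x0 \<in> \<Omega>" "0 < u x0" by force
  obtain e :: 'a where "e \<in> Basis" using nonempty_Basis by blast
  then have "norm e = 1" by simp
  obtain x where "x \<in> closure \<Omega>" "0 < u x" and max: "\<And>y. u y \<le> u x"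
    and strict: "\<And>r y. y \<in> ball (x + r *\<^sub>R e) r \<Longrightarrow> u y < u x"
    using extremal_maximum_point[OF compact_closure[THEN iffD2, OF \<open>bounded \<Omega>\<close>] u_cont
        _ \<open>0 < u x0\<close> _ \<open>norm e = 1\<close>] \<open>x0 \<in> \<Omega>\<close> closure_subset outside
    by blast
  have "x \<in> \<Omega>" using outside[of x] \<open>0 < u x\<close> by force
  have "set_integrable lebesgue (ball x 1) u"
    by (rule set_integrable_subset[OF u_int]) (use \<open>x \<in> \<Omega>\<close> in \<open>auto simp: unit_nbhd_def\<close>)
  then have "set_integrable lebesgue (ball x 1) (\<lambda>y. (u x - u y) / norm (y - x) ^ DIM('a) * K x (y - x))"
    using \<open>open \<Omega>\<close> \<open>x \<in> \<Omega>\<close> \<open>C_Dini_loc \<Omega> u\<close> K_meas K_bounds \<open>0 < lam\<close>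
    by (intro C_Dini_loc_L_K_integrand_integrable[where C = Lam]) force+
  then have "AE y in lebesgue. y \<in> ball x 1 \<longrightarrow> u y = u x"
    using max K_bounds \<open>0 < lam\<close> L_K_nonpos \<open>x \<in> \<Omega>\<close>
    by (intro L_K_nonpos_at_max_imp_AE_eq) force+
  moreover have "ball (x + (1/2) *\<^sub>R e) (1/2) \<subseteq> ball x 1"
    using \<open>norm e = 1\<close> by (simp add: ball_subset_ball_iff dist_norm)
  ultimately have AE_half: "AE y in lebesgue. y \<in> ball (x + (1/2) *\<^sub>R e) (1/2) \<longrightarrow> u y = u x"
    by (elim AE_mp) (auto intro!: AE_I2)
  obtain y where "y \<in> ball (x + (1/2) *\<^sub>R e) (1/2)" "u y = u x"
    by (rule AE_ball_imp_ex[OF _ AE_half]) simp_all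
  with strict show False
    by fastforce
qed

end
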